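(* Let $a,b,g,m,n>0$ and $0<e<1$, and consider the planar system $$\dot x=a-ex-\frac{xy}{1+gy},\qquad \dot y=\frac{xy}{1+gy}-y-\frac{my}{b+ny}.$$ Let $E_0=\left(\frac{a}{e},0\right)$ be its disease-free equilibrium. Then: (1) if $a<\frac{e(m+b)}{b}$, $E_0$ is locally asymptotically stable and is a stable node; if $a>\frac{e(m+b)}{b}$, $E_0$ is a saddle point; (2) if $a=\frac{e(m+b)}{b}$ and $n\neq\frac{(eg+1)b^2+m(eg+1)b}{me}$, then $E_0$ is a saddle-node.
   Context: The system is a rescaled SIR epidemic model with saturated infection rate and saturated treatment rate; $x$ is the (rescaled) susceptible population and $y$ the (rescaled) infected population. *)

theory Defs
  imports "HOL-Analysis.Analysis"
begin

definition sir_field :: "real \<Rightarrow> real \<Rightarrow> real \<Rightarrow> real \<Rightarrow> real \<Rightarrow> real \<Rightarrow> real \<times> real \<Rightarrow> real \<times> real" where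
  "sir_field a b e g m n = (\<lambda>(x, y).
     (a - e * x - x * y / (1 + g * y),
      x * y / (1 + g * y) - y - m * y / (b + n * y)))"

definition is_solution :: "(real \<times> real \<Rightarrow> real \<times> real) \<Rightarrow> (real \<Rightarrow> real \<times> real) \<Rightarrow> bool" where
  "is_solution F z \<longleftrightarrow> (\<forall>t\<ge>0. (z has_vector_derivative F (z t)) (at t within {0..}))"

definition loc_asymp_stable :: "(real \<times> real \<Rightarrow> real \<times> real) \<Rightarrow> real \<times> real \<Rightarrow> bool" where
  "loc_asymp_stable F p \<longleftrightarrow> F p = 0 \<and>
     (\<forall>\<epsilon>>0. \<exists>\<delta>>0. \<forall>z. is_solution F z \<and> dist (z 0) p < \<delta> \<longrightarrow> (\<forall>t\<ge>0. dist (z t) p < \<epsilon>)) \<and>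
     (\<exists>\<delta>>0. \<forall>z. is_solution F z \<and> dist (z 0) p < \<delta> \<longrightarrow> (z \<longlongrightarrow> p) at_top)"

definition jac11 where "jac11 F p = fst (frechet_derivative F (at p) (1, 0))"
definition jac12 where "jac12 F p = fst (frechet_derivative F (at p) (0, 1))"
definition jac21 where "jac21 F p = snd (frechet_derivative F (at p) (1, 0))"
definition jac22 where "jac22 F p = snd (frechet_derivative F (at p) (0, 1))"

definition jac_trace :: "(real \<times> real \<Rightarrow> real \<times> real) \<Rightarrow> real \<times> real \<Rightarrow> real" where
  "jac_trace F p = jac11 F p + jac22 F p"
definition jac_det :: "(real \<times> real \<Rightarrow> real \<times> real) \<Rightarrow> real \<times> real \<Rightarrow> real" where
  "jac_det F p = jac11 F p * jac22 F p - jac12 F p * jac21 F p"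

definition jac_eigenvalue :: "(real \<times> real \<Rightarrow> real \<times> real) \<Rightarrow> real \<times> real \<Rightarrow> complex \<Rightarrow> bool" where
  "jac_eigenvalue F p z \<longleftrightarrow>
     z ^ 2 - complex_of_real (jac_trace F p) * z + complex_of_real (jac_det F p) = 0"

definition stable_node :: "(real \<times> real \<Rightarrow> real \<times> real) \<Rightarrow> real \<times> real \<Rightarrow> bool" where
  "stable_node F p \<longleftrightarrow> F p = 0 \<and> F differentiable (at p) \<and>
     (\<forall>z. jac_eigenvalue F p z \<longrightarrow> Im z = 0 \<and> Re z < 0)"

definition saddle_point :: "(real \<times> real \<Rightarrow> real \<times> real) \<Rightarrow> real \<times> real \<Rightarrow> bool" where
  "saddle_point F p \<longleftrightarrow> F p = 0 \<and> F differentiable (at p) \<and>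
     (\<exists>l1 l2 :: real. l1 < 0 \<and> 0 < l2 \<and>
        jac_eigenvalue F p (complex_of_real l1) \<and> jac_eigenvalue F p (complex_of_real l2))"

text \<open>Saddle-node: a simple zero eigenvalue with the other eigenvalue nonzero, together
  with the saddle-node nondegeneracy condition: for a right null vector v and left null
  vector l of the Jacobian, the second directional derivative of l . F along v at p
  (the quadratic coefficient of the centre-manifold reduction, up to a nonzero factor)
  is nonzero.\<close>
definition saddle_node :: "(real \<times> real \<Rightarrow> real \<times> real) \<Rightarrow> real \<times> real \<Rightarrow> bool" where
  "saddle_node F p \<longleftrightarrow> F p = 0 \<and> F differentiable (at p) \<and>
     jac_eigenvalue F p 0 \<and> jac_trace F p \<noteq> 0 \<and>
     (\<exists>v l c. v \<noteq> 0 \<and> l \<noteq> 0 \<and> c \<noteq> 0 \<and>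
        frechet_derivative F (at p) v = 0 \<and>
        (\<forall>w. l \<bullet> frechet_derivative F (at p) w = 0) \<and>
        (\<forall>\<^sub>F t in nhds 0. (\<lambda>s. l \<bullet> F (p + s *\<^sub>R v)) differentiable (at t)) \<and>
        (deriv (\<lambda>s. l \<bullet> F (p + s *\<^sub>R v)) has_real_derivative c) (at 0))"

end

theory Submission
  imports Defs "HOL-Real_Asymp.Real_Asymp"
begin

(* At E0 = (a/e, 0) the Jacobian is upper triangular with diagonal -e and
   lam = a/e - 1 - m/b, and lam has the sign of a - e(m+b)/b; this gives the node/saddle
   classification.  For lam < 0, the Lyapunov function (x - a/e)^2 + K y^2 satisfies
   V' <= -c V near E0, so it decays exponentially along solutions, which yields local
   asymptotic stability.  For lam = 0 the kernel of the Jacobian is spanned by (a/e, -e)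
   and its range lies in the x-axis; along the kernel direction the y-component of the
   field is s * phi(s), whose second derivative 2 phi'(0) is a nonzero multiple of
   m n e / b^2 - (1 + e g) a / e, nonzero exactly under the condition on n. *)

lemma continuous_on_comp_solution:
  fixes z :: "real \<Rightarrow> 'a::real_normed_vector" and V :: "'a \<Rightarrow> real"
  assumes "\<And>t. t \<ge> 0 \<Longrightarrow> (z has_vector_derivative F (z t)) (at t within {0..})"
    and "\<And>q. (V has_derivative DV q) (at q)"
  shows "continuous_on {0..} (\<lambda>t. V (z t))"
proof -
  have "continuous_on {0..} z"
    unfolding continuous_on_eq_continuous_within
    using has_vector_derivative_continuous[OF assms(1)] by simp
  moreover have "continuous_on UNIV V"
    using assms(2) has_derivative_continuous continuous_on_eq_continuous_within by blast
  ultimately show ?thesis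
    using continuous_on_compose2 by blast
qed

lemma has_real_derivative_comp_solution:
  fixes z :: "real \<Rightarrow> 'a::real_normed_vector" and V :: "'a \<Rightarrow> real"
  assumes "(z has_vector_derivative v) (at t within {0..})" "t > 0"
    and V_deriv: "(V has_derivative DV) (at (z t))"
  shows "((\<lambda>s. V (z s)) has_real_derivative DV v) (at t)"
proof -
  have "(z has_vector_derivative v) (at t within {0<..})"
    using assms(1) by (rule has_vector_derivative_within_subset) auto
  then have "(z has_vector_derivative v) (at t)"
    using at_within_open[of t "{0<..}"] \<open>t > 0\<close> by auto
  then have "((\<lambda>s. V (z s)) has_derivative (\<lambda>h. DV (h *\<^sub>R v))) (at t)"
    unfolding has_vector_derivative_def by (rule has_derivative_compose[where f = z and x = t, OF _ V_deriv])
  then show ?thesis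
    unfolding has_field_derivative_def
    by (simp add: linear_cmul[OF has_derivative_linear[OF V_deriv]] mult.commute[of _ "DV v"])
qed

lemma lyapunov_decay_before_exit:
  fixes z :: "real \<Rightarrow> 'a::real_normed_vector" and V :: "'a \<Rightarrow> real"
  assumes sol: "\<And>t. t \<ge> 0 \<Longrightarrow> (z has_vector_derivative F (z t)) (at t within {0..})"
    and V_deriv: "\<And>q. (V has_derivative DV q) (at q)"
    and decay: "\<And>q. V q < R \<Longrightarrow> DV q (F q) \<le> - c * V q"
    and "t \<ge> 0" and below: "\<And>s. 0 < s \<Longrightarrow> s < t \<Longrightarrow> V (z s) < R"
  shows "V (z t) \<le> exp (- c * t) * V (z 0)"
proof -
  define f where "f s = exp (c * s) * V (z s)" for s
  have "f t \<le> f 0"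
  proof (rule DERIV_nonpos_imp_decreasing_open[OF \<open>t \<ge> 0\<close>])
    show "continuous_on {0..t} f"
      unfolding f_def using continuous_on_comp_solution[OF sol V_deriv]
      by (intro continuous_intros) (auto elim: continuous_on_subset)
    fix s assume "0 < s" "s < t"
    have "(z has_vector_derivative F (z s)) (at s within {0..})"
      using sol \<open>0 < s\<close> by simp
    then have "((\<lambda>s. V (z s)) has_real_derivative DV (z s) (F (z s))) (at s)"
      using \<open>0 < s\<close> V_deriv by (rule has_real_derivative_comp_solution)
    then have "(f has_real_derivative exp (c * s) * (c * V (z s) + DV (z s) (F (z s)))) (at s)"
      unfolding f_def by (auto intro!: derivative_eq_intros simp: algebra_simps)
    moreover have "c * V (z s) + DV (z s) (F (z s)) \<le> 0"
      using decay[OF below[OF \<open>0 < s\<close> \<open>s < t\<close>]] by simp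
    ultimately show "\<exists>y. (f has_real_derivative y) (at s) \<and> y \<le> 0"
      using mult_nonneg_nonpos[of "exp (c * s)"] by auto
  qed
  then show ?thesis
    by (simp add: f_def exp_minus field_simps)
qed

lemma lyapunov_exponential_decay:
  fixes z :: "real \<Rightarrow> 'a::real_normed_vector" and V :: "'a \<Rightarrow> real"
  assumes sol: "\<And>t. t \<ge> 0 \<Longrightarrow> (z has_vector_derivative F (z t)) (at t within {0..})"
    and V_deriv: "\<And>q. (V has_derivative DV q) (at q)"
    and decay: "\<And>q. V q < R \<Longrightarrow> DV q (F q) \<le> - c * V q"
    and V_nonneg: "\<And>q. V q \<ge> 0" and "c \<ge> 0"
    and start: "V (z 0) < R"
    and "t \<ge> 0"
  shows "V (z t) \<le> exp (- c * t) * V (z 0)"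
proof -
  note decay_before_exit = lyapunov_decay_before_exit[OF sol V_deriv decay]
  txt \<open>At the first time V (z s) reaches R, the decay estimate up to that time gives
    V (z s) \<le> V (z 0) < R.\<close>
  have "V (z s) < R" if "s \<ge> 0" for s
  proof (rule ccontr)
    assume "\<not> V (z s) < R"
    define exits where "exits = {s' \<in> {0..s}. R \<le> V (z s')}"
    have "closed exits"
      using continuous_closed_preimage[OF continuous_on_subset[OF continuous_on_comp_solution[OF sol V_deriv]]
          closed_atLeastAtMost closed_atLeast, of 0 s R]
      by (auto simp: exits_def vimage_def Int_def conj_commute)
    moreover have "s \<in> exits"
      using \<open>\<not> V (z s) < R\<close> that by (simp add: exits_def)
    ultimately have first_exit: "Inf exits \<in> exits"
      by (intro closed_contains_Inf) (auto simp: exits_def bdd_below_def)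
    have "V (z s') < R" if "0 < s'" "s' < Inf exits" for s'
      using cInf_lower[of s' exits] that first_exit by (force simp: exits_def bdd_below_def)
    then have "V (z (Inf exits)) \<le> exp (- c * Inf exits) * V (z 0)"
      using first_exit by (intro decay_before_exit) (auto simp: exits_def)
    also have "\<dots> \<le> V (z 0)"
      using first_exit \<open>c \<ge> 0\<close> V_nonneg[of "z 0"] by (intro mult_left_le_one_le) (auto simp: exits_def)
    finally show False
      using first_exit start by (simp add: exits_def)
  qed
  then show ?thesis
    using \<open>t \<ge> 0\<close> by (intro decay_before_exit) auto
qed

context
  fixes F :: "real \<times> real \<Rightarrow> real \<times> real" and V :: "real \<times> real \<Rightarrow> real"
    and DV :: "real \<times> real \<Rightarrow> real \<times> real \<Rightarrow> real" and p :: "real \<times> real" and R c K :: real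
  assumes V_deriv: "\<And>q. (V has_derivative DV q) (at q)"
    and decay: "\<And>q. V q < R \<Longrightarrow> DV q (F q) \<le> - c * V q"
    and lower: "\<And>q. dist q p ^ 2 \<le> V q" and upper: "\<And>q. V q \<le> K * dist q p ^ 2"
    and "c > 0" "R > 0" "K > 0"
begin

lemma lyapunov_nonneg: "V q \<ge> 0"
  using lower[of q] by (meson order_trans zero_le_power2)

lemma lyapunov_less_if_dist_less:
  assumes "dist q p < sqrt (r / K)" "r > 0"
  shows "V q < r"
proof -
  have "dist q p ^ 2 < sqrt (r / K) ^ 2"
    using assms(1) by (intro power_strict_mono) auto
  then have "K * dist q p ^ 2 < r"
    using assms(2) \<open>K > 0\<close> by (simp add: field_simps)
  then show ?thesis
    using upper[of q] by linarith
qed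

lemma lyapunov_dist_bound:
  assumes "is_solution F z" "V (z 0) < R" "t \<ge> 0"
  shows "dist (z t) p ^ 2 \<le> exp (- c * t) * V (z 0)"
proof -
  have "V (z t) \<le> exp (- c * t) * V (z 0)"
    by (rule lyapunov_exponential_decay[where F = F and DV = DV and R = R])
      (use assms V_deriv decay lyapunov_nonneg \<open>c > 0\<close> in \<open>auto simp: is_solution_def\<close>)
  then show ?thesis
    using lower[of "z t"] by linarith
qed

lemma lyapunov_stable:
  assumes "\<epsilon> > 0"
  shows "\<exists>\<delta>>0. \<forall>z. is_solution F z \<and> dist (z 0) p < \<delta> \<longrightarrow> (\<forall>t\<ge>0. dist (z t) p < \<epsilon>)"
proof (intro exI[of _ "sqrt (min R (\<epsilon>\<^sup>2) / K)"] conjI allI impI)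
  show "sqrt (min R (\<epsilon>\<^sup>2) / K) > 0"
    using \<open>R > 0\<close> \<open>K > 0\<close> \<open>\<epsilon> > 0\<close> by simp
  fix z and t :: real
  assume z: "is_solution F z \<and> dist (z 0) p < sqrt (min R (\<epsilon>\<^sup>2) / K)" and "t \<ge> 0"
  then have "V (z 0) < min R (\<epsilon>\<^sup>2)"
    using lyapunov_less_if_dist_less[of "z 0" "min R (\<epsilon>\<^sup>2)"] \<open>R > 0\<close> \<open>\<epsilon> > 0\<close> by simp
  moreover have "exp (- c * t) * V (z 0) \<le> V (z 0)"
    using \<open>c > 0\<close> \<open>t \<ge> 0\<close> lyapunov_nonneg[of "z 0"] by (intro mult_left_le_one_le) auto
  ultimately have "dist (z t) p ^ 2 < \<epsilon>\<^sup>2"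
    using lyapunov_dist_bound[of z t] z \<open>t \<ge> 0\<close> by fastforce
  then show "dist (z t) p < \<epsilon>"
    using \<open>\<epsilon> > 0\<close> by (simp add: power_less_imp_less_base)
qed

lemma lyapunov_attractive:
  "\<exists>\<delta>>0. \<forall>z. is_solution F z \<and> dist (z 0) p < \<delta> \<longrightarrow> (z \<longlongrightarrow> p) at_top"
proof (intro exI[of _ "sqrt (R / K)"] conjI allI impI)
  show "sqrt (R / K) > 0"
    using \<open>R > 0\<close> \<open>K > 0\<close> by simp
  fix z assume z: "is_solution F z \<and> dist (z 0) p < sqrt (R / K)"
  have "((\<lambda>t. exp (- c * t)) \<longlongrightarrow> 0) at_top"
    using \<open>c > 0\<close> by real_asymp
  then have "((\<lambda>t. sqrt (exp (- c * t) * V (z 0))) \<longlongrightarrow> sqrt (0 * V (z 0))) at_top"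
    by (intro tendsto_intros)
  then have majorant: "((\<lambda>t. sqrt (exp (- c * t) * V (z 0))) \<longlongrightarrow> 0) at_top"
    by simp
  have "\<forall>\<^sub>F t in at_top. dist (z t) p \<le> sqrt (exp (- c * t) * V (z 0))"
    using eventually_ge_at_top[of 0]
    by eventually_elim
      (use lyapunov_dist_bound z lyapunov_less_if_dist_less \<open>R > 0\<close> in \<open>simp add: real_le_rsqrt\<close>)
  then have "((\<lambda>t. dist (z t) p) \<longlongrightarrow> 0) at_top"
    by (intro tendsto_sandwich[OF _ _ tendsto_const majorant]) simp_all
  then show "(z \<longlongrightarrow> p) at_top"
    by (rule iffD2[OF tendsto_dist_iff])
qed

lemma loc_asymp_stable_by_lyapunov: "F p = 0 \<Longrightarrow> loc_asymp_stable F p"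
  using lyapunov_stable lyapunov_attractive by (simp add: loc_asymp_stable_def)

end

(* AM-GM bounds the cross term -2 w u y by e u^2 + (M^2/e) y^2; the weight K on y^2 is
   chosen so that the y-decay K mu y^2 pays for the second summand. *)
lemma quadratic_form_decay_estimate:
  fixes u y w h e \<mu> M :: real
  assumes "e > 0" "\<mu> > 0" "\<bar>w\<bar> \<le> M" "h \<le> - \<mu>"
  defines "K \<equiv> 1 + M\<^sup>2 / (e * \<mu>)"
  shows "2 * u * (- e * u - w * y) + 2 * K * y * (y * h) \<le> - min e \<mu> * (u\<^sup>2 + K * y\<^sup>2)"
proof -
  have "2 * \<bar>w * u * y\<bar> \<le> 2 * M * \<bar>u\<bar> * \<bar>y\<bar>"
    using assms(3) by (simp add: abs_mult mult_right_mono)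
  also have "\<dots> \<le> e * u\<^sup>2 + M\<^sup>2 / e * y\<^sup>2"
  proof -
    have "0 \<le> (e * \<bar>u\<bar> - M * \<bar>y\<bar>)\<^sup>2 / e"
      using \<open>e > 0\<close> by simp
    then show ?thesis
      using \<open>e > 0\<close> by (simp add: power2_eq_square field_simps)
  qed
  finally have cross: "- 2 * (w * u * y) \<le> e * u\<^sup>2 + M\<^sup>2 / e * y\<^sup>2"
    by linarith
  have "K \<ge> 1" and K\<mu>: "K * \<mu> = \<mu> + M\<^sup>2 / e"
    using assms(1,2) by (simp_all add: K_def field_simps)
  have "y\<^sup>2 * h \<le> y\<^sup>2 * - \<mu>"
    using assms(4) by (intro mult_left_mono) auto
  then have "2 * K * (y\<^sup>2 * h) \<le> 2 * K * (y\<^sup>2 * - \<mu>)"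
    by (rule mult_left_mono) (use \<open>K \<ge> 1\<close> in simp)
  also have "\<dots> = - 2 * (\<mu> * (K * y\<^sup>2))"
    by (simp add: algebra_simps)
  finally have "2 * K * (y\<^sup>2 * h) \<le> - 2 * (\<mu> * (K * y\<^sup>2))" .
  moreover have "\<mu> * (K * y\<^sup>2) = \<mu> * y\<^sup>2 + M\<^sup>2 / e * y\<^sup>2"
    using arg_cong[OF K\<mu>, of "\<lambda>k. k * y\<^sup>2"] by (simp only: mult_ac distrib_left)
  moreover have "2 * u * (- e * u - w * y) + 2 * K * y * (y * h)
      = - 2 * (e * u\<^sup>2) - 2 * (w * u * y) + 2 * K * (y\<^sup>2 * h)"
    by (simp add: power2_eq_square algebra_simps)
  moreover have "0 \<le> \<mu> * y\<^sup>2"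
    using assms(2) by simp
  ultimately have "2 * u * (- e * u - w * y) + 2 * K * y * (y * h) \<le> - (e * u\<^sup>2) - \<mu> * (K * y\<^sup>2)"
    using cross by argo
  also have "\<dots> \<le> - min e \<mu> * (u\<^sup>2 + K * y\<^sup>2)"
  proof -
    have "min e \<mu> * u\<^sup>2 \<le> e * u\<^sup>2" "min e \<mu> * (K * y\<^sup>2) \<le> \<mu> * (K * y\<^sup>2)"
      using \<open>K \<ge> 1\<close> by (intro mult_right_mono; simp)+
    then show ?thesis
      by (simp add: distrib_left)
  qed
  finally show ?thesis .
qed

lemma power2_dist_Pair_0: "dist q (x0, 0) ^ 2 = (fst q - x0)\<^sup>2 + (snd q)\<^sup>2"
  by (cases q) (simp add: dist_Pair_Pair dist_real_def)

lemma loc_asymp_stable_x_axis_equilibrium_local_bounds: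
  fixes F :: "real \<times> real \<Rightarrow> real \<times> real" and w h :: "real \<times> real \<Rightarrow> real"
  assumes F: "\<And>q. F q = (- e * (fst q - x0) - w q * snd q, snd q * h q)"
    and "e > 0" "\<mu> > 0" "r > 0"
    and near: "\<And>q. dist q (x0, 0) < r \<Longrightarrow> h q \<le> - \<mu> \<and> \<bar>w q\<bar> \<le> M"
  shows "loc_asymp_stable F (x0, 0)"
proof -
  define K where "K = 1 + M\<^sup>2 / (e * \<mu>)"
  define V where "V q = (fst q - x0)\<^sup>2 + K * (snd q)\<^sup>2" for q :: "real \<times> real"
  define DV where "DV q v = 2 * (fst q - x0) * fst v + 2 * K * snd q * snd v" for q v :: "real \<times> real"
  have "K \<ge> 1"
    using \<open>e > 0\<close> \<open>\<mu> > 0\<close> by (simp add: K_def)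
  have lower: "dist q (x0, 0) ^ 2 \<le> V q" for q
    using \<open>K \<ge> 1\<close> mult_right_mono[of 1 K "(snd q)\<^sup>2"] by (simp add: V_def power2_dist_Pair_0)
  show ?thesis
  proof (rule loc_asymp_stable_by_lyapunov[where V = V and DV = DV and R = "r\<^sup>2" and c = "min e \<mu>" and K = K])
    show "F (x0, 0) = 0"
      by (simp add: F zero_prod_def)
    show "(V has_derivative DV q) (at q)" for q
      unfolding V_def DV_def by (auto intro!: derivative_eq_intros simp: fun_eq_iff algebra_simps)
    show "dist q (x0, 0) ^ 2 \<le> V q" for q
      by (rule lower)
    show "V q \<le> K * dist q (x0, 0) ^ 2" for q
      using \<open>K \<ge> 1\<close> mult_right_mono[of 1 K "(fst q - x0)\<^sup>2"]
      by (simp add: V_def power2_dist_Pair_0 algebra_simps)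
    show "DV q (F q) \<le> - min e \<mu> * V q" if "V q < r\<^sup>2" for q
    proof -
      have "dist q (x0, 0) ^ 2 < r ^ 2"
        using lower[of q] that by linarith
      then have "h q \<le> - \<mu> \<and> \<bar>w q\<bar> \<le> M"
        using \<open>r > 0\<close> near by (simp add: power_less_imp_less_base)
      then show ?thesis
        using quadratic_form_decay_estimate[OF \<open>e > 0\<close> \<open>\<mu> > 0\<close>, of "w q" M "h q" "fst q - x0" "snd q"]
        by (simp add: F DV_def V_def K_def)
    qed
    show "min e \<mu> > 0" "r\<^sup>2 > 0" "K > 0"
      using \<open>e > 0\<close> \<open>\<mu> > 0\<close> \<open>r > 0\<close> \<open>K \<ge> 1\<close> by auto
  qed
qed

lemma loc_asymp_stable_x_axis_equilibrium:
  fixes F :: "real \<times> real \<Rightarrow> real \<times> real" and w h :: "real \<times> real \<Rightarrow> real"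
  assumes "\<And>q. F q = (- e * (fst q - x0) - w q * snd q, snd q * h q)"
    and "e > 0" "isCont w (x0, 0)" "isCont h (x0, 0)" "h (x0, 0) < 0"
  shows "loc_asymp_stable F (x0, 0)"
proof -
  define p where "p = (x0, 0::real)"
  define \<mu> where "\<mu> = - h p / 2"
  define M where "M = \<bar>w p\<bar> + 1"
  have "(h \<longlongrightarrow> h p) (nhds p)" "(w \<longlongrightarrow> w p) (nhds p)"
    using assms(3,4) by (simp_all add: p_def isCont_def tendsto_at_iff_tendsto_nhds)
  moreover have "h p < - \<mu>" "\<bar>w p\<bar> < M"
    using assms(5) by (simp_all add: \<mu>_def M_def p_def)
  ultimately have "\<forall>\<^sub>F q in nhds p. h q < - \<mu> \<and> \<bar>w q\<bar> < M"
    by (intro eventually_conj order_tendstoD(2)[of h] order_tendstoD(2)[OF tendsto_rabs, of w])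
  then obtain r where "r > 0" and "\<And>q. dist q p < r \<Longrightarrow> h q < - \<mu> \<and> \<bar>w q\<bar> < M"
    unfolding eventually_nhds_metric by blast
  moreover have "\<mu> > 0"
    using assms(5) by (simp add: \<mu>_def p_def)
  ultimately show ?thesis
    unfolding p_def
    by (intro loc_asymp_stable_x_axis_equilibrium_local_bounds[OF assms(1,2), where \<mu> = \<mu> and M = M and r = r])
      (auto simp: less_imp_le)
qed

lemma jac_trace_det_upper_triangular:
  assumes "(F has_derivative (\<lambda>q. (j11 * fst q + j12 * snd q, j22 * snd q))) (at p)"
  shows "jac_trace F p = j11 + j22" "jac_det F p = j11 * j22"
proof -
  note D = frechet_derivative_at[OF assms, symmetric]
  show "jac_trace F p = j11 + j22" by (simp add: jac_trace_def jac11_def jac22_def D)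
  show "jac_det F p = j11 * j22" by (simp add: jac_det_def jac11_def jac12_def jac21_def jac22_def D)
qed

lemma jac_eigenvalue_upper_triangular:
  assumes "(F has_derivative (\<lambda>q. (j11 * fst q + j12 * snd q, j22 * snd q))) (at p)"
  shows "jac_eigenvalue F p z \<longleftrightarrow> z = of_real j11 \<or> z = of_real j22"
proof -
  have "jac_eigenvalue F p z \<longleftrightarrow> (z - of_real j11) * (z - of_real j22) = 0"
    by (simp add: jac_eigenvalue_def jac_trace_det_upper_triangular[OF assms] algebra_simps power2_eq_square)
  then show ?thesis by simp
qed

lemma stable_node_upper_triangular:
  assumes "F p = 0" "(F has_derivative (\<lambda>q. (j11 * fst q + j12 * snd q, j22 * snd q))) (at p)"
    and "j11 < 0" "j22 < 0"
  shows "stable_node F p"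
  using assms differentiableI by (auto simp: stable_node_def jac_eigenvalue_upper_triangular[OF assms(2)])

lemma saddle_point_upper_triangular:
  assumes "F p = 0" "(F has_derivative (\<lambda>q. (j11 * fst q + j12 * snd q, j22 * snd q))) (at p)"
    and "j11 < 0" "0 < j22"
  shows "saddle_point F p"
  unfolding saddle_point_def jac_eigenvalue_upper_triangular[OF assms(2)]
  using assms differentiableI by blast

lemma has_real_derivative_deriv_mult_ident_at_0:
  fixes f :: "real \<Rightarrow> real"
  assumes "open S" "0 \<in> S"
    and f_deriv: "\<And>s. s \<in> S \<Longrightarrow> (f has_real_derivative f' s) (at s)"
    and f'_deriv: "f' differentiable (at 0)"
  shows "\<forall>\<^sub>F t in nhds 0. (\<lambda>s. s * f s) differentiable (at t)"
    and "(deriv (\<lambda>s. s * f s) has_real_derivative 2 * f' 0) (at 0)"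
proof -
  have D: "((\<lambda>s. s * f s) has_real_derivative f s + s * f' s) (at s)" if "s \<in> S" for s
    by (rule DERIV_cong[OF DERIV_mult[OF DERIV_ident f_deriv[OF that]]]) simp
  show "\<forall>\<^sub>F t in nhds 0. (\<lambda>s. s * f s) differentiable (at t)"
    using eventually_nhds_in_open[OF assms(1,2)] by (rule eventually_mono) (use D real_differentiable_def in blast)
  obtain f'' where "(f' has_real_derivative f'') (at 0)"
    using f'_deriv real_differentiableE by blast
  then have "((\<lambda>s. f s + s * f' s) has_real_derivative 2 * f' 0) (at 0)"
    by (intro DERIV_cong[OF DERIV_add[OF f_deriv[OF assms(2)] DERIV_mult[OF DERIV_ident]]]) simp_all
  then show "(deriv (\<lambda>s. s * f s) has_real_derivative 2 * f' 0) (at 0)"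
    by (rule has_field_derivative_transform_within_open[OF _ assms(1,2)])
      (simp add: DERIV_imp_deriv[OF D])
qed

lemma saddle_node_upper_triangular:
  assumes "F p = 0"
    and D: "(F has_derivative (\<lambda>q. (j11 * fst q + j12 * snd q, 0))) (at p)" and "j11 \<noteq> 0"
    and "v \<noteq> 0" "j11 * fst v + j12 * snd v = 0"
    and "\<forall>\<^sub>F t in nhds 0. (\<lambda>s. snd (F (p + s *\<^sub>R v))) differentiable (at t)"
    and "(deriv (\<lambda>s. snd (F (p + s *\<^sub>R v))) has_real_derivative c) (at 0)" "c \<noteq> 0"
  shows "saddle_node F p"
proof -
  have "(F has_derivative (\<lambda>q. (j11 * fst q + j12 * snd q, 0 * snd q))) (at p)"
    using D by simp
  note J = jac_trace_det_upper_triangular[OF this] frechet_derivative_at[OF D, symmetric]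
  show ?thesis
    unfolding saddle_node_def
    by (intro conjI exI[of _ v] exI[of _ "(0, 1)"] exI[of _ c])
      (use assms differentiableI J in \<open>simp_all add: jac_eigenvalue_def zero_prod_def inner_prod_def\<close>)
qed

lemma sir_field_disease_free_equilibrium:
  "e \<noteq> 0 \<Longrightarrow> sir_field a b e g m n (a / e, 0) = 0"
  by (simp add: sir_field_def zero_prod_def)

lemma sir_field_has_derivative_on_x_axis:
  assumes "b \<noteq> 0"
  shows "(sir_field a b e g m n has_derivative
           (\<lambda>q. (- e * fst q + - x0 * snd q, (x0 - 1 - m / b) * snd q))) (at (x0, 0))"
proof -
  have "sir_field a b e g m n = (\<lambda>q. (a - e * fst q - fst q * snd q / (1 + g * snd q),
      fst q * snd q / (1 + g * snd q) - snd q - m * snd q / (b + n * snd q)))"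
    by (simp add: sir_field_def case_prod_beta fun_eq_iff)
  then show ?thesis
    by simp (rule has_derivative_eq_rhs, (rule derivative_eq_intros | simp add: assms)+,
        simp add: fun_eq_iff field_simps assms)
qed

lemma sir_field_second_derivative_along_kernel:
  assumes "b \<noteq> 0"
  shows "\<forall>\<^sub>F t in nhds 0. (\<lambda>s. snd (sir_field a b e g m n ((x0, 0) + s *\<^sub>R (x0, - e)))) differentiable (at t)"
      (is ?differentiable)
    and "(deriv (\<lambda>s. snd (sir_field a b e g m n ((x0, 0) + s *\<^sub>R (x0, - e)))) has_real_derivative
           2 * e * (m * n * e / b\<^sup>2 - (1 + g * e) * x0)) (at 0)" (is ?second_derivative)
proof -
  define \<phi> where "\<phi> s = - e * ((1 + s) * x0 / (1 - g * e * s) - 1 - m / (b - n * e * s))" for s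
  define \<phi>' where "\<phi>' s = - e * ((1 + g * e) * x0 / (1 - g * e * s)\<^sup>2 - m * n * e / (b - n * e * s)\<^sup>2)" for s
  define S where "S = {s. 1 - g * e * s \<noteq> 0 \<and> b - n * e * s \<noteq> 0}"
  have "open S" unfolding S_def
    by (intro open_Collect_conj open_Collect_neq continuous_intros)
  have "0 \<in> S" using assms by (simp add: S_def)
  have \<phi>_deriv: "(\<phi> has_real_derivative \<phi>' s) (at s)" if "s \<in> S" for s
    using that unfolding S_def \<phi>_def \<phi>'_def
    by (auto intro!: derivative_eq_intros simp: field_simps power2_eq_square)
  have "\<phi>' differentiable (at 0)"
    unfolding \<phi>'_def using assms by (intro derivative_intros) auto
  note second = has_real_derivative_deriv_mult_ident_at_0[OF \<open>open S\<close> \<open>0 \<in> S\<close> \<phi>_deriv this]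
  have line: "(\<lambda>s. snd (sir_field a b e g m n ((x0, 0) + s *\<^sub>R (x0, - e)))) = (\<lambda>s. s * \<phi> s)"
    by (simp add: fun_eq_iff sir_field_def \<phi>_def algebra_simps)
  have "2 * \<phi>' 0 = 2 * e * (m * n * e / b\<^sup>2 - (1 + g * e) * x0)"
    by (simp add: \<phi>'_def algebra_simps)
  then show ?differentiable ?second_derivative
    using second unfolding line by (simp_all add: mult.assoc)
qed

lemma sir_field_saddle_node:
  assumes "b > 0" "m > 0" "e > 0" and threshold: "a = e * (m + b) / b"
    and "n \<noteq> ((e * g + 1) * b ^ 2 + m * (e * g + 1) * b) / (m * e)"
  shows "saddle_node (sir_field a b e g m n) (a / e, 0)"
proof -
  define x0 where "x0 = a / e"
  have x0: "x0 = 1 + m / b"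
    using threshold assms(1,3) by (simp add: x0_def field_simps)
  have "x0 * b = m + b"
    using x0 assms(1) by (simp add: field_simps)
  then have "(1 + g * e) * x0 * b\<^sup>2 = (1 + g * e) * (m + b) * b"
    by (metis power2_eq_square mult.assoc)
  moreover have "m * n * e \<noteq> (1 + g * e) * (m + b) * b"
    using assms(1-3,5) by (simp add: field_simps power2_eq_square)
  ultimately have "m * n * e \<noteq> (1 + g * e) * x0 * b\<^sup>2"
    by metis
  then have "m * n * e / b\<^sup>2 \<noteq> (1 + g * e) * x0"
    using assms(1) by (simp add: divide_eq_eq)
  then have curvature: "2 * e * (m * n * e / b\<^sup>2 - (1 + g * e) * x0) \<noteq> 0"
    using assms(3) by simp
  have linearization: "(sir_field a b e g m n has_derivative
      (\<lambda>q. (- e * fst q + - x0 * snd q, 0))) (at (x0, 0))"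
    using sir_field_has_derivative_on_x_axis[of b a e g m n x0] assms(1) x0 by simp
  have equilibrium: "sir_field a b e g m n (x0, 0) = 0"
    using sir_field_disease_free_equilibrium assms(3) by (simp add: x0_def)
  have "- e \<noteq> 0" "(x0, - e) \<noteq> 0" "- e * fst (x0, - e) + - x0 * snd (x0, - e) = 0"
    using assms(3) by (simp_all add: zero_prod_def)
  then show ?thesis
    unfolding x0_def[symmetric]
    using saddle_node_upper_triangular[OF equilibrium linearization _ _ _
        sir_field_second_derivative_along_kernel[of b] curvature] assms(1)
    by simp
qed

lemma sir_field_loc_asymp_stable:
  assumes "e > 0" "b \<noteq> 0" and "a / e - 1 - m / b < 0"
  shows "loc_asymp_stable (sir_field a b e g m n) (a / e, 0)"
proof (rule loc_asymp_stable_x_axis_equilibrium)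
  let ?w = "\<lambda>q. fst q / (1 + g * snd q)"
  let ?h = "\<lambda>q. fst q / (1 + g * snd q) - 1 - m / (b + n * snd q)"
  show "sir_field a b e g m n q = (- e * (fst q - a / e) - ?w q * snd q, snd q * ?h q)" for q
    using \<open>e > 0\<close> by (simp add: sir_field_def split_beta algebra_simps)
  show "isCont ?w (a / e, 0)" "isCont ?h (a / e, 0)"
    using \<open>b \<noteq> 0\<close> by (auto intro!: continuous_intros)
  show "?h (a / e, 0) < 0"
    using assms(3) by simp
qed (use \<open>e > 0\<close> in simp)

theorem theorem2p1:
  fixes a b e g m n :: real
  assumes "a > 0" "b > 0" "g > 0" "m > 0" "n > 0" "0 < e" "e < 1"
  shows "(a < e * (m + b) / b \<longrightarrow>
            loc_asymp_stable (sir_field a b e g m n) (a / e, 0) \<and>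
            stable_node (sir_field a b e g m n) (a / e, 0))
       \<and> (a > e * (m + b) / b \<longrightarrow> saddle_point (sir_field a b e g m n) (a / e, 0))
       \<and> (a = e * (m + b) / b \<and> n \<noteq> ((e * g + 1) * b ^ 2 + m * (e * g + 1) * b) / (m * e) \<longrightarrow>
            saddle_node (sir_field a b e g m n) (a / e, 0))"
proof -
  define lam where "lam = a / e - 1 - m / b"
  have threshold: "a < e * (m + b) / b \<longleftrightarrow> lam < 0" "a > e * (m + b) / b \<longleftrightarrow> lam > 0"
    using assms by (auto simp: lam_def field_simps)
  have equilibrium: "sir_field a b e g m n (a / e, 0) = 0"
    using assms by (simp add: sir_field_disease_free_equilibrium)
  have linearization: "(sir_field a b e g m n has_derivative
      (\<lambda>q. (- e * fst q + - (a / e) * snd q, lam * snd q))) (at (a / e, 0))"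
    unfolding lam_def using assms by (intro sir_field_has_derivative_on_x_axis) simp
  have "loc_asymp_stable (sir_field a b e g m n) (a / e, 0) \<and> stable_node (sir_field a b e g m n) (a / e, 0)"
    if "a < e * (m + b) / b"
    using that threshold(1) assms sir_field_loc_asymp_stable
      stable_node_upper_triangular[OF equilibrium linearization]
    by (simp add: lam_def)
  moreover have "saddle_point (sir_field a b e g m n) (a / e, 0)" if "a > e * (m + b) / b"
    using that threshold(2) assms saddle_point_upper_triangular[OF equilibrium linearization] by simp
  moreover have "saddle_node (sir_field a b e g m n) (a / e, 0)"
    if "a = e * (m + b) / b" "n \<noteq> ((e * g + 1) * b ^ 2 + m * (e * g + 1) * b) / (m * e)"
    using that assms sir_field_saddle_node by simp
  ultimately show ?thesis
    by blast
qed

end
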